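(* Let $X\subseteq S^1$ and $0<r\le r'<\frac12$. The (non-continuous) map $\eta:S^1\to S^1$, $\eta(y)=\frac{1+2r}{1+2r'}\,y$ for $y\in[0,1)$, maps $T_r(X)$ into $T_{r'}(X)$ and determines a simplicial map $$\eta:\mathbf{VR}_{\le}\Big(T_r(X);\tfrac{2r}{1+2r}\Big)\to\mathbf{VR}_{\le}\Big(T_{r'}(X);\tfrac{2r'}{1+2r'}\Big)$$ such that $\pi_{r'}\circ\eta=\pi_r$; that is, the square formed by $\eta$, the simplicial homotopy equivalences $\pi_r:\mathbf{VR}_{\le}(T_r(X);\frac{2r}{1+2r})\to\check{\mathbf C}_{\le}(X;r)$ and $\pi_{r'}:\mathbf{VR}_{\le}(T_{r'}(X);\frac{2r'}{1+2r'})\to\check{\mathbf C}_{\le}(X;r')$, and the inclusion $\check{\mathbf C}_{\le}(X;r)\subseteq\check{\mathbf C}_{\le}(X;r')$ commutes.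
   Context: $S^1$ is the circle of circumference $1$ with arc-length metric; points are identified with numbers in $[0,1)$, and $aX+b=\{(ax+b)\bmod1:x\in X\}$. For $0<s<\frac12$, $T_s(X)=\frac{1}{1+2s}X\cup\big(\frac{1}{1+2s}(X\cap[0,2s)_{S^1})+\frac{1}{1+2s}\big)$ and $\pi_s(y)=(1+2s)y\bmod 1$ for $y\in[0,1)$; $\pi_s$ induces a simplicial homotopy equivalence $\mathbf{VR}_{\le}(T_s(X);\frac{2s}{1+2s})\to\check{\mathbf C}_{\le}(X;s)$. $\mathbf{VR}_{\le}(Y;t)$ is the Vietoris–Rips complex on $Y$ (faces: finite subsets of diameter $\le t$), and $\check{\mathbf C}_{\le}(X;s)$ is the Čech complex on $X$ (faces: finite subsets contained in some closed arc of length $2s$, i.e. whose closed $s$-balls in $S^1$ have a common point). *)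

theory Defs
  imports "HOL-Analysis.Analysis"
begin

text \<open>Points of the circle S^1 (circumference 1) are represented by reals in [0,1).
  Reduction mod 1 is frac.\<close>

definition circ_dist :: "real \<Rightarrow> real \<Rightarrow> real" where
  "circ_dist x y = min (frac (x - y)) (frac (y - x))"

definition affine_circ :: "real \<Rightarrow> real \<Rightarrow> real set \<Rightarrow> real set" where
  "affine_circ a b X = (\<lambda>x. frac (a * x + b)) ` X"

definition arc0 :: "real \<Rightarrow> real set" where
  "arc0 s = {x. 0 \<le> x \<and> x < 2 * s}"

definition T_map :: "real \<Rightarrow> real set \<Rightarrow> real set" where
  "T_map s X = affine_circ (1 / (1 + 2 * s)) 0 X
     \<union> affine_circ (1 / (1 + 2 * s)) (1 / (1 + 2 * s)) (X \<inter> arc0 s)"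

definition pi_map :: "real \<Rightarrow> real \<Rightarrow> real" where
  "pi_map s y = frac ((1 + 2 * s) * y)"

definition VR_le :: "real set \<Rightarrow> real \<Rightarrow> real set set" where
  "VR_le Y t = {\<sigma>. \<sigma> \<subseteq> Y \<and> finite \<sigma> \<and> \<sigma> \<noteq> {} \<and> (\<forall>a\<in>\<sigma>. \<forall>b\<in>\<sigma>. circ_dist a b \<le> t)}"

definition Cech_le :: "real set \<Rightarrow> real \<Rightarrow> real set set" where
  "Cech_le X s = {\<sigma>. \<sigma> \<subseteq> X \<and> finite \<sigma> \<and> \<sigma> \<noteq> {} \<and>
      (\<exists>c. 0 \<le> c \<and> c < 1 \<and> (\<forall>x\<in>\<sigma>. circ_dist x c \<le> s))}"

definition eta_map :: "real \<Rightarrow> real \<Rightarrow> real \<Rightarrow> real" where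
  "eta_map r r' y = (1 + 2 * r) / (1 + 2 * r') * y"

end

theory Submission
  imports Defs
begin

(* On [0,1) the circle distance is min |x - y| (1 - |x - y|), and eta is multiplication by
   c = (1 + 2r)/(1 + 2r') <= 1, which keeps points in [0,1) and scales |x - y| by c.
   Writing the Rips threshold 2s/(1 + 2s) as 1 - 1/(1 + 2s): a pair with |x - y| <= 1 - 1/(1 + 2r)
   only gets shorter, and a pair with |x - y| >= 1/(1 + 2r) is sent to |x - y| >= 1/(1 + 2r'),
   since c/(1 + 2r) = 1/(1 + 2r'). The same cancellation sends the two copies x/(1 + 2r) and
   (x + 1)/(1 + 2r) making up T_r(X) to the corresponding copies in T_r'(X), and gives
   pi_r' o eta = pi_r. *)

lemma circ_dist_commute: "circ_dist x y = circ_dist y x"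
  unfolding circ_dist_def by simp

lemma circ_dist_unit_interval:
  assumes "x \<in> {0..<1}" "y \<in> {0..<1}"
  shows "circ_dist x y = min \<bar>x - y\<bar> (1 - \<bar>x - y\<bar>)"
proof -
  have ordered: "circ_dist x y = min (x - y) (1 - (x - y))"
    if "x \<in> {0..<1}" "y \<in> {0..<1}" "y \<le> x" for x y :: real
  proof (cases "x = y")
    case False
    with that have "x - y \<in> {0<..<1}" by auto
    then have "frac (x - y) = x - y" "frac (y - x) = 1 - (x - y)"
      using frac_non_zero[of "x - y"] by auto
    then show ?thesis by (simp add: circ_dist_def)
  qed (simp add: circ_dist_def)
  show ?thesis
  proof (cases "y \<le> x")
    case True
    then show ?thesis using ordered[OF assms] by simp
  next
    case False
    then show ?thesis using ordered[OF assms(2,1)] by (simp add: circ_dist_commute)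
  qed
qed

lemma circ_dist_scale_le:
  fixes c \<theta> :: real
  assumes c: "0 < c" "c \<le> 1" and xy: "x \<in> {0..<1}" "y \<in> {0..<1}"
    and close: "circ_dist x y \<le> 1 - \<theta>"
  shows "circ_dist (c * x) (c * y) \<le> 1 - c * \<theta>"
proof -
  have "c * x \<in> {0..<1}" "c * y \<in> {0..<1}"
    using c xy mult_left_le_one_le[of x c] mult_left_le_one_le[of y c] by auto
  moreover have "\<bar>c * x - c * y\<bar> = c * \<bar>x - y\<bar>"
    using c by (simp add: abs_mult flip: right_diff_distrib)
  ultimately have scaled: "circ_dist (c * x) (c * y) = min (c * \<bar>x - y\<bar>) (1 - c * \<bar>x - y\<bar>)"
    by (simp add: circ_dist_unit_interval)
  from close consider "\<bar>x - y\<bar> \<le> 1 - \<theta>" | "\<theta> \<le> \<bar>x - y\<bar>"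
    using circ_dist_unit_interval[OF xy] by linarith
  then show ?thesis
  proof cases
    case 1
    then have "c * \<bar>x - y\<bar> \<le> c * (1 - \<theta>)" using c by simp
    then show ?thesis using scaled c by (simp add: right_diff_distrib)
  next
    case 2
    then have "c * \<theta> \<le> c * \<bar>x - y\<bar>" using c by simp
    then show ?thesis using scaled by simp
  qed
qed

lemma T_map_subset_unit_interval: "T_map s X \<subseteq> {0..<1}"
  unfolding T_map_def affine_circ_def by (auto simp: frac_lt_1)

lemma T_map_unit_interval:
  assumes X: "X \<subseteq> {0..<1}" and s: "0 \<le> s"
  shows "T_map s X = (\<lambda>x. x / (1 + 2 * s)) ` X \<union> (\<lambda>x. (x + 1) / (1 + 2 * s)) ` (X \<inter> arc0 s)"
proof -
  have "frac (1 / (1 + 2 * s) * x + 0) = x / (1 + 2 * s)" if "x \<in> X" for x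
    using that X s by (subst frac_eq_id) (auto simp: field_simps)
  moreover have "frac (1 / (1 + 2 * s) * x + 1 / (1 + 2 * s)) = (x + 1) / (1 + 2 * s)"
    if "x \<in> X \<inter> arc0 s" for x
    using that X s by (subst frac_eq_id) (auto simp: arc0_def field_simps)
  ultimately show ?thesis
    unfolding T_map_def affine_circ_def by (auto simp: image_iff)
qed

lemma eta_map_divide: "1 + 2 * r \<noteq> 0 \<Longrightarrow> eta_map r r' (x / (1 + 2 * r)) = x / (1 + 2 * r')"
  unfolding eta_map_def by simp

lemma eta_map_image_T_map:
  assumes "X \<subseteq> {0..<1}" "0 \<le> r" "r \<le> r'"
  shows "eta_map r r' ` T_map r X \<subseteq> T_map r' X"
proof -
  have "X \<inter> arc0 r \<subseteq> X \<inter> arc0 r'"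
    using assms by (auto simp: arc0_def)
  then show ?thesis
    using assms by (auto simp: T_map_unit_interval eta_map_divide)
qed

lemma eta_map_VR_le:
  assumes X: "X \<subseteq> {0..<1}" and r: "0 \<le> r" "r \<le> r'"
    and \<sigma>: "\<sigma> \<in> VR_le (T_map r X) (2 * r / (1 + 2 * r))"
  shows "eta_map r r' ` \<sigma> \<in> VR_le (T_map r' X) (2 * r' / (1 + 2 * r'))"
proof -
  define c where "c = (1 + 2 * r) / (1 + 2 * r')"
  have c: "0 < c" "c \<le> 1"
    using r by (auto simp: c_def)
  have "circ_dist (c * x) (c * y) \<le> 2 * r' / (1 + 2 * r')" if "x \<in> \<sigma>" "y \<in> \<sigma>" for x y
  proof -
    have "x \<in> {0..<1}" "y \<in> {0..<1}"
      using that \<sigma> T_map_subset_unit_interval[of r X] by (auto simp: VR_le_def)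
    moreover have "circ_dist x y \<le> 1 - 1 / (1 + 2 * r)"
      using that \<sigma> r by (auto simp: VR_le_def field_simps)
    ultimately have "circ_dist (c * x) (c * y) \<le> 1 - c * (1 / (1 + 2 * r))"
      by (rule circ_dist_scale_le[OF c])
    also have "\<dots> = 2 * r' / (1 + 2 * r')"
      using r by (simp add: c_def field_simps)
    finally show ?thesis .
  qed
  moreover have "eta_map r r' ` \<sigma> \<subseteq> T_map r' X"
    using \<sigma> eta_map_image_T_map[OF X r] by (auto simp: VR_le_def)
  ultimately show ?thesis
    using \<sigma> by (auto simp: VR_le_def eta_map_def c_def)
qed

lemma pi_map_eta_map: "1 + 2 * r' \<noteq> 0 \<Longrightarrow> pi_map r' (eta_map r r' y) = pi_map r y"
  unfolding pi_map_def eta_map_def by simp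

lemma Cech_le_mono: "s \<le> s' \<Longrightarrow> Cech_le X s \<subseteq> Cech_le X s'"
  unfolding Cech_le_def by fastforce

theorem proposition9p5:
  fixes X :: "real set" and r r' :: real
  assumes "X \<subseteq> {0..<1}"
    and "0 < r" and "r \<le> r'" and "r' < 1/2"
  shows "eta_map r r' ` T_map r X \<subseteq> T_map r' X \<and>
    (\<forall>\<sigma>\<in>VR_le (T_map r X) (2 * r / (1 + 2 * r)).
           eta_map r r' ` \<sigma> \<in> VR_le (T_map r' X) (2 * r' / (1 + 2 * r'))) \<and>
    (\<forall>y\<in>T_map r X. pi_map r' (eta_map r r' y) = pi_map r y) \<and>
    Cech_le X r \<subseteq> Cech_le X r'"
  using assms
  by (simp add: eta_map_image_T_map eta_map_VR_le pi_map_eta_map Cech_le_mono)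

end
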